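(* $URD(6;K_2,S(C_3))\supseteq J(6)=\{(1,2),(5,0)\}$; that is, for each $(r,s)\in\{(1,2),(5,0)\}$ there exists a partition of the edge set of $K_6$ into $r$ 1-factors and $s$ classes each consisting of a single 3-sun spanning all six vertices.
   Context: A 3-sun is the graph on $6$ distinct vertices $a_1,a_2,a_3,b_1,b_2,b_3$ consisting of the triangle $(a_1,a_2,a_3)$ together with the edges $\{a_i,b_i\}$, $i=1,2,3$. $URD(v;K_2,S(C_3))$ denotes the set of pairs $(r,s)$ such that the edge set of $K_v$ can be partitioned into $r$ 1-factors and $s$ classes each of which is a set of vertex-disjoint 3-suns covering every vertex exactly once. *)

theory Defs
  imports Main
begin

definition complete_edges :: "'a set \<Rightarrow> 'a set set" where
  "complete_edges V = {{x, y} | x y. x \<in> V \<and> y \<in> V \<and> x \<noteq> y}"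

definition one_factor :: "'a set \<Rightarrow> 'a set set \<Rightarrow> bool" where
  "one_factor V F \<longleftrightarrow> F \<subseteq> complete_edges V \<and> (\<forall>v\<in>V. \<exists>!e. e \<in> F \<and> v \<in> e)"

definition sun_edges :: "'a \<Rightarrow> 'a \<Rightarrow> 'a \<Rightarrow> 'a \<Rightarrow> 'a \<Rightarrow> 'a \<Rightarrow> 'a set set" where
  "sun_edges a1 a2 a3 b1 b2 b3 = {{a1, a2}, {a2, a3}, {a1, a3}, {a1, b1}, {a2, b2}, {a3, b3}}"

definition is_3sun :: "'a set set \<Rightarrow> 'a set \<Rightarrow> bool" where
  "is_3sun E W \<longleftrightarrow> (\<exists>a1 a2 a3 b1 b2 b3. distinct [a1, a2, a3, b1, b2, b3] \<and>
      W = {a1, a2, a3, b1, b2, b3} \<and> E = sun_edges a1 a2 a3 b1 b2 b3)"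

definition sun_factor :: "'a set \<Rightarrow> 'a set set \<Rightarrow> bool" where
  "sun_factor V S \<longleftrightarrow> (\<exists>\<S>. (\<forall>(E, W)\<in>\<S>. is_3sun E W) \<and>
      (\<forall>v\<in>V. \<exists>!p. p \<in> \<S> \<and> v \<in> snd p) \<and>
      (\<Union>p\<in>\<S>. snd p) = V \<and>
      S = (\<Union>p\<in>\<S>. fst p))"

definition URD :: "'a set \<Rightarrow> (nat \<times> nat) set" where
  "URD V = {(r, s). \<exists>C :: nat \<Rightarrow> 'a set set.
      (\<forall>i<r. one_factor V (C i)) \<and>
      (\<forall>i. r \<le> i \<and> i < r + s \<longrightarrow> sun_factor V (C i)) \<and>
      (\<forall>i<r + s. \<forall>j<r + s. i \<noteq> j \<longrightarrow> C i \<inter> C j = {}) \<and>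
      (\<Union>i<r + s. C i) = complete_edges V}"

end

theory Submission
  imports Defs
begin

text \<open>For \<open>(5, 0)\<close> take the classical 1-factorisation of
  \<open>K\<^sub>6\<close>: with vertex 5 as \<open>\<infinity>\<close> and the others read modulo 5, the factor \<open>F\<^sub>i\<close> consists of
  \<open>{\<infinity>, i}\<close>, \<open>{i - 1, i + 1}\<close> and \<open>{i - 2, i + 2}\<close>. For \<open>(1, 2)\<close> take the 3-sun with triangle
  \<open>0 1 2\<close> and pendant edges \<open>03, 14, 25\<close>, the 3-sun with triangle \<open>3 4 5\<close> and pendant edges
  \<open>31, 42, 50\<close>; the three edges left over, \<open>04, 15, 23\<close>, form a 1-factor.\<close>

lemma complete_edges_empty [simp]: "complete_edges {} = {}"
  by (simp add: complete_edges_def)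

lemma complete_edges_insert [simp]:
  "complete_edges (insert x V) = (\<lambda>y. {x, y}) ` (V - {x}) \<union> complete_edges V"
  unfolding complete_edges_def by (auto simp: insert_commute)

lemma one_factor_three_edges:
  assumes "distinct [a, b, c, d, e, f]" and "V = {a, b, c, d, e, f}"
  shows "one_factor V {{a, b}, {c, d}, {e, f}}"
  unfolding one_factor_def
proof
  show "{{a, b}, {c, d}, {e, f}} \<subseteq> complete_edges V"
    using assms by (auto simp: complete_edges_def)
  show "\<forall>v\<in>V. \<exists>!x. x \<in> {{a, b}, {c, d}, {e, f}} \<and> v \<in> x"
  proof
    fix v assume "v \<in> V"
    then consider "v = a" | "v = b" | "v = c" | "v = d" | "v = e" | "v = f"
      using assms(2) by blast
    then show "\<exists>!x. x \<in> {{a, b}, {c, d}, {e, f}} \<and> v \<in> x"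
      using assms(1) by cases (simp_all, blast+)
  qed
qed

lemma sun_factor_sun_edges:
  assumes "distinct [a1, a2, a3, b1, b2, b3]" and "V = {a1, a2, a3, b1, b2, b3}"
  shows "sun_factor V (sun_edges a1 a2 a3 b1 b2 b3)"
  unfolding sun_factor_def
proof (intro exI conjI)
  let ?\<S> = "{(sun_edges a1 a2 a3 b1 b2 b3, V)}"
  show "\<forall>(E, W)\<in>?\<S>. is_3sun E W"
    unfolding is_3sun_def using assms by blast
  show "\<forall>v\<in>V. \<exists>!p. p \<in> ?\<S> \<and> v \<in> snd p"
    by auto
  show "(\<Union>p\<in>?\<S>. snd p) = V" and "sun_edges a1 a2 a3 b1 b2 b3 = (\<Union>p\<in>?\<S>. fst p)"
    by simp_all
qed

text \<open>Listing the classes lets pairwise disjointness be stated as \<^const>\<open>sorted_wrt\<close>, which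
  simplification evaluates on a concrete list.\<close>

lemma URD_memI:
  assumes "length Cs = r + s"
    and "\<forall>F\<in>set (take r Cs). one_factor V F"
    and "\<forall>S\<in>set (drop r Cs). sun_factor V S"
    and "sorted_wrt disjnt Cs"
    and "\<Union>(set Cs) = complete_edges V"
  shows "(r, s) \<in> URD V"
  unfolding URD_def
proof (clarify, intro exI conjI allI impI)
  fix i
  show "i < r \<Longrightarrow> one_factor V (Cs ! i)"
    using assms(1,2) nth_mem[of i "take r Cs"] by simp
  show "r \<le> i \<and> i < r + s \<Longrightarrow> sun_factor V (Cs ! i)"
    using assms(1,3) nth_mem[of "i - r" "drop r Cs"] by auto
  fix j
  assume "i < r + s" "j < r + s" "i \<noteq> j"
  then show "Cs ! i \<inter> Cs ! j = {}"
    using assms(1,4) by (auto simp: sorted_wrt_iff_nth_less disjnt_def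
        dest: nat_neq_iff[THEN iffD1])
next
  have "(\<Union>i<r + s. Cs ! i) = \<Union>(set Cs)"
    using assms(1) by (auto simp: in_set_conv_nth) (metis nth_mem)
  with assms(5) show "(\<Union>i<r + s. Cs ! i) = complete_edges V"
    by simp
qed

lemma zero_to_five: "{0..<6::nat} = {0, 1, 2, 3, 4, 5}"
  by auto

lemma one_two_in_URD_six: "(1, 2) \<in> URD {0..<6::nat}"
proof -
  let ?Cs = "[{{0, 4}, {1, 5}, {2, 3}}, sun_edges 0 1 2 3 4 5, sun_edges 3 4 5 1 2 (0::nat)]"
  show ?thesis
  proof (rule URD_memI[of ?Cs])
    show "\<forall>F\<in>set (take 1 ?Cs). one_factor {0..<6} F"
      by (simp add: zero_to_five) (rule one_factor_three_edges; auto)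
    show "\<forall>S\<in>set (drop 1 ?Cs). sun_factor {0..<6} S"
      by (simp add: zero_to_five) (intro conjI; rule sun_factor_sun_edges; auto)
    show "sorted_wrt disjnt ?Cs"
      by (simp add: sun_edges_def disjnt_def doubleton_eq_iff)
    show "\<Union>(set ?Cs) = complete_edges {0..<6}"
      unfolding zero_to_five sun_edges_def by (rule equalityI; simp add: doubleton_eq_iff)
  qed simp
qed

lemma five_zero_in_URD_six: "(5, 0) \<in> URD {0..<6::nat}"
proof -
  let ?Cs = "[{{5, 0}, {1, 4}, {2, 3}}, {{5, 1}, {2, 0}, {3, 4}}, {{5, 2}, {3, 1}, {4, 0}},
    {{5, 3}, {4, 2}, {0, 1}}, {{5, 4}, {0, 3}, {1, 2::nat}}]"
  show ?thesis
  proof (rule URD_memI[of ?Cs])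
    show "\<Union>(set ?Cs) = complete_edges {0..<6}"
      unfolding zero_to_five by (rule equalityI; simp add: doubleton_eq_iff)
  qed (auto simp: zero_to_five doubleton_eq_iff disjnt_def intro!: one_factor_three_edges)
qed

theorem lemma3p1:
  shows "{(1, 2), (5, 0)} \<subseteq> URD ({0..<6} :: nat set)"
  using one_two_in_URD_six five_zero_in_URD_six by simp

end
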